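(* Let $d\ge 1$, $\boldsymbol{w}\in\mathbb{R}^d\setminus\{\boldsymbol{0}\}$, $b\in\mathbb{R}$, and let $C(\boldsymbol{x})=\mathbf{1}\{\boldsymbol{w}\cdot\boldsymbol{x}+b>0\}$ be the linear classifier. Let $\boldsymbol{\mu}_0\in\mathbb{R}^d$ be a unit vector, with sign chosen so that $\boldsymbol{w}\cdot\boldsymbol{\mu}_0\ge 0$. Let $\varepsilon>0$, $\delta\ge 0$. Put $\boldsymbol{v}_0=\boldsymbol{w}/\|\boldsymbol{w}\|$, let $\theta\in[0,\pi/2]$ be the angle with $\cos\theta=\boldsymbol{v}_0\cdot\boldsymbol{\mu}_0$, let $\boldsymbol{n}_0=\boldsymbol{n}/\|\boldsymbol{n}\|$ with $\boldsymbol{n}=\boldsymbol{v}_0-(\boldsymbol{v}_0\cdot\boldsymbol{\mu}_0)\boldsymbol{\mu}_0$ (if $\boldsymbol{n}=\boldsymbol{0}$, let $\boldsymbol{n}_0$ be any unit vector orthogonal to $\boldsymbol{\mu}_0$), so that $\boldsymbol{v}_0=\cos\theta\,\boldsymbol{\mu}_0+\sin\theta\,\boldsymbol{n}_0$. Let $\beta=\min(\varepsilon\cos\theta,\delta)$ and $\boldsymbol{u}_2=\beta\boldsymbol{\mu}_0+\sqrt{\varepsilon^2-\beta^2}\,\boldsymbol{n}_0$. Then $$\Omega_\varepsilon=\Omega(\varepsilon\boldsymbol{v}_0)\cup\Omega(-\varepsilon\boldsymbol{v}_0),\qquad \Omega_{\varepsilon,\delta}=\Omega(\boldsymbol{u}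_2)\cup\Omega(-\boldsymbol{u}_2).$$
   Context: All norms are Euclidean ($\ell_2$). For $\boldsymbol{v}\in\mathbb{R}^d$, $\Omega(\boldsymbol{v})=\{\boldsymbol{x}\in\mathbb{R}^d: C(\boldsymbol{x}+\boldsymbol{v})\neq C(\boldsymbol{x})\}$. A point $\boldsymbol{x}'$ is an $\varepsilon$-adversarial example of $\boldsymbol{x}$ if $\|\boldsymbol{x}-\boldsymbol{x}'\|\le\varepsilon$ and $C(\boldsymbol{x})\ne C(\boldsymbol{x}')$; it is an $(\varepsilon,\delta)$-strong-adversarial example of $\boldsymbol{x}$ if moreover $|(\boldsymbol{x}-\boldsymbol{x}')\cdot\boldsymbol{\mu}_0|\le\delta$. $\Omega_\varepsilon$ is the set of $\boldsymbol{x}$ having an $\varepsilon$-adversarial example and $\Omega_{\varepsilon,\delta}$ the set of $\boldsymbol{x}$ having an $(\varepsilon,\delta)$-strong-adversarial example. ($\boldsymbol{\mu}_0$ plays the role of the "signal direction"; since the strong-adversarial condition is invariant under $\boldsymbol{\mu}_0\mapsto-\boldsymbol{\mu}_0$, its sign is fixed so that the angle $\theta$ lies in $[0,\pi/2]$.) *)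

theory Defs
  imports "HOL-Analysis.Analysis"
begin

definition lin_clf :: "'a::euclidean_space \<Rightarrow> real \<Rightarrow> 'a \<Rightarrow> bool" where
  "lin_clf w b x = (w \<bullet> x + b > 0)"

definition Omega :: "('a::euclidean_space \<Rightarrow> bool) \<Rightarrow> 'a \<Rightarrow> 'a set" where
  "Omega C v = {x. C (x + v) \<noteq> C x}"

definition adv_example :: "('a::euclidean_space \<Rightarrow> bool) \<Rightarrow> real \<Rightarrow> 'a \<Rightarrow> 'a \<Rightarrow> bool" where
  "adv_example C \<epsilon> x x' \<longleftrightarrow> norm (x - x') \<le> \<epsilon> \<and> C x \<noteq> C x'"

definition strong_adv_example ::
  "('a::euclidean_space \<Rightarrow> bool) \<Rightarrow> 'a \<Rightarrow> real \<Rightarrow> real \<Rightarrow> 'a \<Rightarrow> 'a \<Rightarrow> bool" where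
  "strong_adv_example C \<mu>0 \<epsilon> \<delta> x x' \<longleftrightarrow>
     adv_example C \<epsilon> x x' \<and> \<bar>(x - x') \<bullet> \<mu>0\<bar> \<le> \<delta>"

definition Omega_eps :: "('a::euclidean_space \<Rightarrow> bool) \<Rightarrow> real \<Rightarrow> 'a set" where
  "Omega_eps C \<epsilon> = {x. \<exists>x'. adv_example C \<epsilon> x x'}"

definition Omega_eps_delta ::
  "('a::euclidean_space \<Rightarrow> bool) \<Rightarrow> 'a \<Rightarrow> real \<Rightarrow> real \<Rightarrow> 'a set" where
  "Omega_eps_delta C \<mu>0 \<epsilon> \<delta> = {x. \<exists>x'. strong_adv_example C \<mu>0 \<epsilon> \<delta> x x'}"

end

theory Submission
  imports Defs
begin

text \<open>
  For fixed \<open>x\<close>, whether \<open>C (x + d) \<noteq> C x\<close> depends only on \<open>w \<bullet> d\<close>, and if \<open>d\<close> flips the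
  label then so does \<open>u\<close> or \<open>-u\<close> as soon as \<open>\<bar>w \<bullet> d\<bar> \<le> w \<bullet> u\<close>. Hence if \<open>\<plusminus>u\<close> are admissible
  perturbations and \<open>u\<close> maximises \<open>\<bar>w \<bullet> d\<bar>\<close> over all admissible \<open>d\<close>, the points having an
  adversarial example are exactly \<open>\<Omega>(u) \<union> \<Omega>(-u)\<close>. Over the ball of radius \<open>\<epsilon>\<close> the maximiser is
  \<open>\<epsilon> v\<^sub>0\<close> by Cauchy-Schwarz. Over the ball cut by the slab \<open>\<bar>d \<bullet> \<mu>\<^sub>0\<bar> \<le> \<delta>\<close>, the decomposition
  \<open>v\<^sub>0 = cos \<theta> \<mu>\<^sub>0 + sin \<theta> n\<^sub>0\<close> and Bessel's inequality reduce the problem to maximising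
  \<open>a cos \<theta> + t sin \<theta>\<close> over the disc \<open>a\<^sup>2 + t\<^sup>2 \<le> \<epsilon>\<^sup>2\<close> cut by \<open>\<bar>a\<bar> \<le> \<delta>\<close>. The maximum is at
  \<open>(\<beta>, sqrt (\<epsilon>\<^sup>2 - \<beta>\<^sup>2))\<close>: the point of tangency \<open>\<epsilon> (cos \<theta>, sin \<theta>)\<close> if it lies in the slab,
  and the corner \<open>(\<delta>, sqrt (\<epsilon>\<^sup>2 - \<delta>\<^sup>2))\<close> otherwise.
\<close>

lemma Omega_eps_eq_UN_cball:
  "Omega_eps C \<epsilon> = (\<Union>d \<in> cball 0 \<epsilon>. Omega C d)"
proof (intro set_eqI iffI)
  fix x assume "x \<in> Omega_eps C \<epsilon>"
  then obtain x' where "norm (x - x') \<le> \<epsilon>" "C x \<noteq> C x'"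
    unfolding Omega_eps_def adv_example_def by blast
  then show "x \<in> (\<Union>d \<in> cball 0 \<epsilon>. Omega C d)"
    unfolding Omega_def by (intro UN_I[of "x' - x"]) (auto simp: norm_minus_commute)
next
  fix x assume "x \<in> (\<Union>d \<in> cball 0 \<epsilon>. Omega C d)"
  then obtain d where "norm d \<le> \<epsilon>" "C (x + d) \<noteq> C x"
    unfolding Omega_def by auto
  then have "adv_example C \<epsilon> x (x + d)"
    unfolding adv_example_def by auto
  then show "x \<in> Omega_eps C \<epsilon>"
    unfolding Omega_eps_def by blast
qed

lemma Omega_eps_delta_eq_UN_cball_slab:
  "Omega_eps_delta C \<mu> \<epsilon> \<delta> = (\<Union>d \<in> cball 0 \<epsilon> \<inter> {d. \<bar>d \<bullet> \<mu>\<bar> \<le> \<delta>}. Omega C d)"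
proof (intro set_eqI iffI)
  fix x assume "x \<in> Omega_eps_delta C \<mu> \<epsilon> \<delta>"
  then obtain x' where "norm (x - x') \<le> \<epsilon>" "\<bar>(x - x') \<bullet> \<mu>\<bar> \<le> \<delta>" "C x \<noteq> C x'"
    unfolding Omega_eps_delta_def strong_adv_example_def adv_example_def by blast
  moreover have "\<bar>(x' - x) \<bullet> \<mu>\<bar> = \<bar>(x - x') \<bullet> \<mu>\<bar>"
    by (metis abs_minus_cancel inner_minus_left minus_diff_eq)
  ultimately show "x \<in> (\<Union>d \<in> cball 0 \<epsilon> \<inter> {d. \<bar>d \<bullet> \<mu>\<bar> \<le> \<delta>}. Omega C d)"
    unfolding Omega_def by (intro UN_I[of "x' - x"]) (auto simp: norm_minus_commute)
next
  fix x assume "x \<in> (\<Union>d \<in> cball 0 \<epsilon> \<inter> {d. \<bar>d \<bullet> \<mu>\<bar> \<le> \<delta>}. Omega C d)"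
  then obtain d where "norm d \<le> \<epsilon>" "\<bar>d \<bullet> \<mu>\<bar> \<le> \<delta>" "C (x + d) \<noteq> C x"
    unfolding Omega_def by auto
  then have "strong_adv_example C \<mu> \<epsilon> \<delta> x (x + d)"
    unfolding strong_adv_example_def adv_example_def by (auto simp: inner_minus_left)
  then show "x \<in> Omega_eps_delta C \<mu> \<epsilon> \<delta>"
    unfolding Omega_eps_delta_def by blast
qed

lemma lin_clf_normalize:
  assumes "w \<noteq> 0"
  shows "lin_clf w b = lin_clf (w /\<^sub>R norm w) (b / norm w)"
proof
  fix x
  have "w \<bullet> x + b = norm w * ((w /\<^sub>R norm w) \<bullet> x + b / norm w)"
    using assms by (simp add: field_simps)
  then show "lin_clf w b x = lin_clf (w /\<^sub>R norm w) (b / norm w) x"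
    unfolding lin_clf_def using assms by (simp add: zero_less_mult_iff)
qed

lemma Omega_lin_clf_subset:
  assumes "\<bar>w \<bullet> d\<bar> \<le> w \<bullet> u"
  shows "Omega (lin_clf w b) d \<subseteq> Omega (lin_clf w b) u \<union> Omega (lin_clf w b) (- u)"
  using assms unfolding Omega_def lin_clf_def by (auto simp: inner_add_right inner_diff_right abs_le_iff)

lemma UN_Omega_lin_clf_eq:
  assumes "u \<in> D" "- u \<in> D" "\<And>d. d \<in> D \<Longrightarrow> \<bar>w \<bullet> d\<bar> \<le> w \<bullet> u"
  shows "(\<Union>d \<in> D. Omega (lin_clf w b) d) = Omega (lin_clf w b) u \<union> Omega (lin_clf w b) (- u)"
  using assms Omega_lin_clf_subset by blast

lemma linear_le_on_disc:
  fixes c s a t \<epsilon> :: real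
  assumes cs: "c\<^sup>2 + s\<^sup>2 = 1" and disc: "a\<^sup>2 + t\<^sup>2 \<le> \<epsilon>\<^sup>2" and "\<epsilon> \<ge> 0"
  shows "c * a + s * t \<le> \<epsilon>"
proof -
  have "(c * a + s * t)\<^sup>2 \<le> (c * a + s * t)\<^sup>2 + (c * t - s * a)\<^sup>2"
    by simp
  also have "\<dots> = (c\<^sup>2 + s\<^sup>2) * (a\<^sup>2 + t\<^sup>2)"
    by (simp add: algebra_simps power2_eq_square)
  also have "\<dots> \<le> \<epsilon>\<^sup>2"
    using cs disc by simp
  finally show ?thesis
    using \<open>\<epsilon> \<ge> 0\<close> by (rule power2_le_imp_le)
qed

lemma linear_disc_slab_le_edge_corner:
  fixes c s a t \<epsilon> \<delta> :: real
  assumes c: "c \<ge> 0" and s: "s \<ge> 0" and cs: "c\<^sup>2 + s\<^sup>2 = 1" and \<delta>: "0 \<le> \<delta>" "\<delta> < \<epsilon> * c"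
    and disc: "a\<^sup>2 + t\<^sup>2 \<le> \<epsilon>\<^sup>2" and slab: "\<bar>a\<bar> \<le> \<delta>"
  shows "c * a + s * t \<le> c * \<delta> + s * sqrt (\<epsilon>\<^sup>2 - \<delta>\<^sup>2)"
proof -
  define T where "T = sqrt (\<epsilon>\<^sup>2 - \<delta>\<^sup>2)"
  have "c \<le> 1"
    using cs by (metis abs_le_D1 abs_square_le_1 le_add_same_cancel1 zero_le_power2)
  have "0 < \<epsilon> * c"
    using \<delta> by linarith
  then have "\<epsilon> > 0"
    using c by (auto simp: zero_less_mult_iff)
  then have "\<delta> < \<epsilon>"
    using \<delta> \<open>c \<le> 1\<close> mult_left_le[of c \<epsilon>] by linarith
  then have T2: "T\<^sup>2 = \<epsilon>\<^sup>2 - \<delta>\<^sup>2" and "T > 0"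
    unfolding T_def using \<delta> by (simp_all add: power_mono power_strict_mono)
  have "s\<^sup>2 = 1 - c\<^sup>2"
    using cs by simp
  then have "(\<epsilon> * s)\<^sup>2 = \<epsilon>\<^sup>2 - (\<epsilon> * c)\<^sup>2"
    by (simp add: power_mult_distrib right_diff_distrib)
  also have "\<dots> \<le> T\<^sup>2"
    using \<delta> T2 power_strict_mono[of \<delta> "\<epsilon> * c" 2] by simp
  finally have "\<epsilon> * s \<le> T"
    by (rule power2_le_imp_le) (use \<open>T > 0\<close> in simp)
  have corner: "s * \<delta> \<le> c * T"
    using mult_left_mono[OF \<open>\<epsilon> * s \<le> T\<close> c] mult_left_mono[of \<delta> "\<epsilon> * c" s] \<delta> s
    by (simp add: algebra_simps)
  have "\<delta> * a + T * t \<le> T\<^sup>2 + \<delta>\<^sup>2"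
    using T2 disc sum_power2_ge_zero[of "\<delta> - a" "T - t"]
    by (simp add: power2_eq_square algebra_simps)
  \<comment> \<open>\<open>T (c, s) = s (\<delta>, T) + (c T - s \<delta>) (1, 0)\<close> with both coefficients nonnegative.\<close>
  have "T * (c * a + s * t) = s * (\<delta> * a + T * t) + (c * T - s * \<delta>) * a"
    by (simp add: algebra_simps)
  also have "\<dots> \<le> s * (T\<^sup>2 + \<delta>\<^sup>2) + (c * T - s * \<delta>) * \<delta>"
    using \<open>\<delta> * a + T * t \<le> T\<^sup>2 + \<delta>\<^sup>2\<close> corner s slab
    by (intro add_mono[OF mult_left_mono mult_left_mono]) auto
  also have "\<dots> = T * (c * \<delta> + s * T)"
    by (simp add: algebra_simps power2_eq_square)
  finally show ?thesis
    using \<open>T > 0\<close> unfolding T_def by simp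
qed

lemma linear_disc_slab_le_corner:
  fixes c s a t \<epsilon> \<delta> :: real
  defines "\<beta> \<equiv> min (\<epsilon> * c) \<delta>"
  assumes c: "c \<ge> 0" and s: "s \<ge> 0" and cs: "c\<^sup>2 + s\<^sup>2 = 1" and \<epsilon>: "\<epsilon> \<ge> 0" and \<delta>: "\<delta> \<ge> 0"
    and disc: "a\<^sup>2 + t\<^sup>2 \<le> \<epsilon>\<^sup>2" and slab: "\<bar>a\<bar> \<le> \<delta>"
  shows "c * a + s * t \<le> c * \<beta> + s * sqrt (\<epsilon>\<^sup>2 - \<beta>\<^sup>2)"
proof (cases "\<epsilon> * c \<le> \<delta>")
  case True
  have "s\<^sup>2 = 1 - c\<^sup>2"
    using cs by simp
  then have "\<epsilon>\<^sup>2 - \<beta>\<^sup>2 = (\<epsilon> * s)\<^sup>2"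
    using True unfolding \<beta>_def by (simp add: power_mult_distrib right_diff_distrib)
  then have "sqrt (\<epsilon>\<^sup>2 - \<beta>\<^sup>2) = \<epsilon> * s"
    using s \<epsilon> by (metis real_sqrt_abs abs_of_nonneg mult_nonneg_nonneg)
  then have "c * \<beta> + s * sqrt (\<epsilon>\<^sup>2 - \<beta>\<^sup>2) = \<epsilon> * (c\<^sup>2 + s\<^sup>2)"
    using True unfolding \<beta>_def by (simp add: power2_eq_square algebra_simps)
  then show ?thesis
    using linear_le_on_disc[OF cs disc \<epsilon>] cs by simp
next
  case False
  then show ?thesis
    using linear_disc_slab_le_edge_corner[OF c s cs \<delta> _ disc slab] unfolding \<beta>_def by simp
qed

lemma inner_orthonormal_pair_sq_le:
  fixes d p q :: "'a::real_inner"
  assumes p: "norm p = 1" and q: "norm q = 1" and pq: "p \<bullet> q = 0"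
  shows "(d \<bullet> p)\<^sup>2 + (d \<bullet> q)\<^sup>2 \<le> (norm d)\<^sup>2"
proof -
  define r where "r = (d \<bullet> p) *\<^sub>R p + (d \<bullet> q) *\<^sub>R q"
  have pp: "p \<bullet> p = 1" and qq: "q \<bullet> q = 1"
    using p q by (simp_all add: norm_eq_1)
  have dr: "d \<bullet> r = (d \<bullet> p)\<^sup>2 + (d \<bullet> q)\<^sup>2" and rr: "r \<bullet> r = (d \<bullet> p)\<^sup>2 + (d \<bullet> q)\<^sup>2"
    unfolding r_def using pp qq pq
    by (simp_all add: inner_add_right inner_add_left inner_commute[of q p] power2_eq_square)
  have "0 \<le> (d - r) \<bullet> (d - r)"
    by simp
  also have "\<dots> = d \<bullet> d - 2 * (d \<bullet> r) + r \<bullet> r"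
    by (simp add: inner_diff_left inner_diff_right inner_commute)
  finally show ?thesis
    using dr rr by (simp add: power2_norm_eq_inner)
qed

lemma unit_vector_orthogonal_decomposition:
  fixes v \<mu> n\<^sub>0 :: "'a::real_inner"
  defines "n \<equiv> v - (v \<bullet> \<mu>) *\<^sub>R \<mu>"
  assumes v: "norm v = 1" and \<mu>: "norm \<mu> = 1"
    and n\<^sub>0: "n \<noteq> 0 \<Longrightarrow> n\<^sub>0 = n /\<^sub>R norm n" "n = 0 \<Longrightarrow> norm n\<^sub>0 = 1 \<and> n\<^sub>0 \<bullet> \<mu> = 0"
  shows "v = (v \<bullet> \<mu>) *\<^sub>R \<mu> + norm n *\<^sub>R n\<^sub>0" and "norm n\<^sub>0 = 1" and "n\<^sub>0 \<bullet> \<mu> = 0"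
    and "(v \<bullet> \<mu>)\<^sup>2 + (norm n)\<^sup>2 = 1"
proof -
  have vv: "v \<bullet> v = 1" and \<mu>\<mu>: "\<mu> \<bullet> \<mu> = 1"
    using v \<mu> by (simp_all add: norm_eq_1)
  have "n \<bullet> \<mu> = 0"
    unfolding n_def using \<mu>\<mu> by (simp add: inner_diff_left)
  then have "n = norm n *\<^sub>R n\<^sub>0 \<and> norm n\<^sub>0 = 1 \<and> n\<^sub>0 \<bullet> \<mu> = 0"
    using n\<^sub>0 by (cases "n = 0") auto
  then show "v = (v \<bullet> \<mu>) *\<^sub>R \<mu> + norm n *\<^sub>R n\<^sub>0" and "norm n\<^sub>0 = 1" and "n\<^sub>0 \<bullet> \<mu> = 0"
    unfolding n_def by (metis diff_add_cancel add.commute)+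
  have "(norm n)\<^sup>2 = 1 - (v \<bullet> \<mu>)\<^sup>2"
    unfolding n_def power2_norm_eq_inner using vv \<mu>\<mu>
    by (simp add: inner_diff_left inner_diff_right inner_commute power2_eq_square)
  then show "(v \<bullet> \<mu>)\<^sup>2 + (norm n)\<^sup>2 = 1"
    by simp
qed

lemma cball_slab_corner_mem:
  fixes \<mu> n\<^sub>0 :: "'a::real_inner" and \<epsilon> \<delta> c :: real
  defines "\<beta> \<equiv> min (\<epsilon> * c) \<delta>"
  assumes \<mu>: "norm \<mu> = 1" and n\<^sub>0: "norm n\<^sub>0 = 1" "n\<^sub>0 \<bullet> \<mu> = 0"
    and c: "0 \<le> c" "c \<le> 1" and \<epsilon>: "\<epsilon> \<ge> 0" and \<delta>: "\<delta> \<ge> 0"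
  shows "\<beta> *\<^sub>R \<mu> + sqrt (\<epsilon>\<^sup>2 - \<beta>\<^sup>2) *\<^sub>R n\<^sub>0 \<in> cball 0 \<epsilon> \<inter> {d. \<bar>d \<bullet> \<mu>\<bar> \<le> \<delta>}"
proof -
  define u where "u = \<beta> *\<^sub>R \<mu> + sqrt (\<epsilon>\<^sup>2 - \<beta>\<^sup>2) *\<^sub>R n\<^sub>0"
  have "0 \<le> \<beta>" "\<beta> \<le> \<delta>" "\<beta> \<le> \<epsilon>"
    unfolding \<beta>_def using c \<epsilon> \<delta> mult_left_le[of c \<epsilon>] by auto
  then have \<beta>\<epsilon>: "\<beta>\<^sup>2 \<le> \<epsilon>\<^sup>2"
    by (simp add: power_mono)
  have \<mu>\<mu>: "\<mu> \<bullet> \<mu> = 1" and nn: "n\<^sub>0 \<bullet> n\<^sub>0 = 1"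
    using \<mu> n\<^sub>0 by (simp_all add: norm_eq_1)
  have "u \<bullet> \<mu> = \<beta>"
    unfolding u_def using \<mu>\<mu> n\<^sub>0 by (simp add: inner_add_left)
  moreover have "(norm u)\<^sup>2 = \<epsilon>\<^sup>2"
    unfolding u_def power2_norm_eq_inner using \<mu>\<mu> nn n\<^sub>0 \<beta>\<epsilon>
    by (simp add: inner_add_left inner_add_right inner_commute[of \<mu> n\<^sub>0] power2_eq_square)
  ultimately show ?thesis
    unfolding u_def[symmetric] using \<open>0 \<le> \<beta>\<close> \<open>\<beta> \<le> \<delta>\<close> \<epsilon>
    by (simp add: power2_eq_iff_nonneg)
qed

lemma inner_cball_slab_le_corner:
  fixes \<mu> n\<^sub>0 d :: "'a::real_inner" and \<epsilon> \<delta> c s :: real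
  defines "\<beta> \<equiv> min (\<epsilon> * c) \<delta>"
  assumes \<mu>: "norm \<mu> = 1" and n\<^sub>0: "norm n\<^sub>0 = 1" "n\<^sub>0 \<bullet> \<mu> = 0"
    and cs: "c \<ge> 0" "s \<ge> 0" "c\<^sup>2 + s\<^sup>2 = 1" and "\<epsilon> \<ge> 0" "\<delta> \<ge> 0"
    and d: "d \<in> cball 0 \<epsilon> \<inter> {d. \<bar>d \<bullet> \<mu>\<bar> \<le> \<delta>}"
  shows "\<bar>(c *\<^sub>R \<mu> + s *\<^sub>R n\<^sub>0) \<bullet> d\<bar> \<le> (c *\<^sub>R \<mu> + s *\<^sub>R n\<^sub>0) \<bullet> (\<beta> *\<^sub>R \<mu> + sqrt (\<epsilon>\<^sup>2 - \<beta>\<^sup>2) *\<^sub>R n\<^sub>0)"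
proof -
  have \<mu>\<mu>: "\<mu> \<bullet> \<mu> = 1" and nn: "n\<^sub>0 \<bullet> n\<^sub>0 = 1"
    using \<mu> n\<^sub>0 by (simp_all add: norm_eq_1)
  have "(d \<bullet> \<mu>)\<^sup>2 + (d \<bullet> n\<^sub>0)\<^sup>2 \<le> (norm d)\<^sup>2"
    using inner_orthonormal_pair_sq_le[OF \<mu> n\<^sub>0(1)] n\<^sub>0(2) by (metis inner_commute)
  also have "\<dots> \<le> \<epsilon>\<^sup>2"
    using d by (simp add: power_mono)
  finally have disc: "(d \<bullet> \<mu>)\<^sup>2 + (d \<bullet> n\<^sub>0)\<^sup>2 \<le> \<epsilon>\<^sup>2" .
  have slab: "\<bar>d \<bullet> \<mu>\<bar> \<le> \<delta>"
    using d by simp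
  have max: "c * a + s * t \<le> c * \<beta> + s * sqrt (\<epsilon>\<^sup>2 - \<beta>\<^sup>2)"
    if "a\<^sup>2 + t\<^sup>2 \<le> \<epsilon>\<^sup>2" "\<bar>a\<bar> \<le> \<delta>" for a t
    using linear_disc_slab_le_corner[OF cs \<open>\<epsilon> \<ge> 0\<close> \<open>\<delta> \<ge> 0\<close> that] unfolding \<beta>_def .
  have "(c *\<^sub>R \<mu> + s *\<^sub>R n\<^sub>0) \<bullet> d = c * (d \<bullet> \<mu>) + s * (d \<bullet> n\<^sub>0)"
    by (simp add: inner_add_left inner_commute[of \<mu> d] inner_commute[of n\<^sub>0 d])
  moreover have "(c *\<^sub>R \<mu> + s *\<^sub>R n\<^sub>0) \<bullet> (\<beta> *\<^sub>R \<mu> + sqrt (\<epsilon>\<^sup>2 - \<beta>\<^sup>2) *\<^sub>R n\<^sub>0)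
      = c * \<beta> + s * sqrt (\<epsilon>\<^sup>2 - \<beta>\<^sup>2)"
    using \<mu>\<mu> nn n\<^sub>0(2) by (simp add: inner_add_left inner_add_right inner_commute[of \<mu> n\<^sub>0])
  ultimately show ?thesis
    using max[OF disc slab] max[of "- (d \<bullet> \<mu>)" "- (d \<bullet> n\<^sub>0)"] disc slab by (simp add: abs_le_iff)
qed

theorem lemma1:
  fixes w \<mu>0 n0 :: "'a::euclidean_space" and b \<epsilon> \<delta> :: real
  defines "v0 \<equiv> w /\<^sub>R norm w"
  defines "\<theta> \<equiv> arccos (v0 \<bullet> \<mu>0)"
  defines "n \<equiv> v0 - (v0 \<bullet> \<mu>0) *\<^sub>R \<mu>0"
  defines "\<beta> \<equiv> min (\<epsilon> * cos \<theta>) \<delta>"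
  defines "u2 \<equiv> \<beta> *\<^sub>R \<mu>0 + sqrt (\<epsilon>\<^sup>2 - \<beta>\<^sup>2) *\<^sub>R n0"
  assumes "w \<noteq> 0"
    and "norm \<mu>0 = 1"
    and "w \<bullet> \<mu>0 \<ge> 0"
    and "\<epsilon> > 0" and "\<delta> \<ge> 0"
    and "n \<noteq> 0 \<Longrightarrow> n0 = n /\<^sub>R norm n"
    and "n = 0 \<Longrightarrow> norm n0 = 1 \<and> n0 \<bullet> \<mu>0 = 0"
  shows "Omega_eps (lin_clf w b) \<epsilon> =
           Omega (lin_clf w b) (\<epsilon> *\<^sub>R v0) \<union> Omega (lin_clf w b) (- (\<epsilon> *\<^sub>R v0))
       \<and> Omega_eps_delta (lin_clf w b) \<mu>0 \<epsilon> \<delta> =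
           Omega (lin_clf w b) u2 \<union> Omega (lin_clf w b) (- u2)"
proof -
  define c where "c = v0 \<bullet> \<mu>0"
  define s where "s = norm n"
  have "norm v0 = 1"
    unfolding v0_def using assms(6) by simp
  have v0: "v0 = c *\<^sub>R \<mu>0 + s *\<^sub>R n0" and n0: "norm n0 = 1" "n0 \<bullet> \<mu>0 = 0"
    and cs: "c\<^sup>2 + s\<^sup>2 = 1"
    using unit_vector_orthogonal_decomposition[OF \<open>norm v0 = 1\<close> assms(7,11,12)[unfolded n_def]]
    unfolding c_def s_def n_def by auto
  have "c \<ge> 0" "s \<ge> 0"
    using assms(8) unfolding c_def s_def v0_def by simp_all
  have "\<bar>c\<bar> \<le> 1"
    using cs by (metis abs_square_le_1 le_add_same_cancel1 zero_le_power2)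
  then have \<beta>: "\<beta> = min (\<epsilon> * c) \<delta>"
    unfolding \<beta>_def \<theta>_def c_def by (simp add: cos_arccos_abs)
  show ?thesis
    unfolding lin_clf_normalize[OF assms(6), folded v0_def]
      Omega_eps_eq_UN_cball Omega_eps_delta_eq_UN_cball_slab
  proof (intro conjI UN_Omega_lin_clf_eq)
    show "\<epsilon> *\<^sub>R v0 \<in> cball 0 \<epsilon>" "- (\<epsilon> *\<^sub>R v0) \<in> cball 0 \<epsilon>"
      using \<open>norm v0 = 1\<close> assms(9) by auto
    show "\<bar>v0 \<bullet> d\<bar> \<le> v0 \<bullet> (\<epsilon> *\<^sub>R v0)" if "d \<in> cball 0 \<epsilon>" for d
      using that Cauchy_Schwarz_ineq2[of v0 d] \<open>norm v0 = 1\<close> by (simp add: dot_square_norm)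
    show "u2 \<in> cball 0 \<epsilon> \<inter> {d. \<bar>d \<bullet> \<mu>0\<bar> \<le> \<delta>}"
      using cball_slab_corner_mem[OF assms(7) n0 \<open>c \<ge> 0\<close>] \<open>\<bar>c\<bar> \<le> 1\<close> assms(9,10)
      unfolding u2_def \<beta> by simp
    then show "- u2 \<in> cball 0 \<epsilon> \<inter> {d. \<bar>d \<bullet> \<mu>0\<bar> \<le> \<delta>}"
      by simp
    show "\<bar>v0 \<bullet> d\<bar> \<le> v0 \<bullet> u2" if "d \<in> cball 0 \<epsilon> \<inter> {d. \<bar>d \<bullet> \<mu>0\<bar> \<le> \<delta>}" for d
      using inner_cball_slab_le_corner[OF assms(7) n0 \<open>c \<ge> 0\<close> \<open>s \<ge> 0\<close> cs _ assms(10) that] assms(9)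
      unfolding v0 u2_def \<beta> by simp
  qed
qed

end
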